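(* Let $p$ be a prime, let $G,H$ be finite groups, and let $U\leq G\times H$ be a subdirect product. Write $K=k_1(U)$ and $q(U)=G/K$. Then $U$ is $p$-extensible if one of the following conditions holds: (i) the $p$-primary part of the Schur multiplier $M(q(U))=H_2(q(U),\mathbb{Z})$ is trivial; (ii) the $p$-primary component of the coinflation map $\alpha: H_2(G,\mathbb{Z})\to H_2(G/K,\mathbb{Z})$ is surjective.
   Context: For finite groups $G,H$ and $U\leq G\times H$: $p_1(U)=\{g\in G:\exists h,(g,h)\in U\}$, $p_2(U)=\{h\in H:\exists g,(g,h)\in U\}$, $k_1(U)=\{g\in G:(g,1)\in U\}$, $k_2(U)=\{h\in H:(1,h)\in U\}$. $U$ is a subdirect product if $p_1(U)=G$ and $p_2(U)=H$. The Goursat quotient is $q(U)=p_1(U)/k_1(U)$ (isomorphic to $p_2(U)/k_2(U)$). An abelian group $A$ satisfies the Hypothesis (with set of primes $\pi$) if there is a unique set of primes $\pi$ such that for every $n\in\mathbb{N}$ the $n$-torsion part of $A$ is cyclic of order $n_\pi$ (the $\pi$-part of $n$). $U$ is $A$-extensible if every homomorphism $U\to A$ extends to a homomorphism $G\times H\to A$. $U$ is $p$-extensible if it is $A$-extensible for every abelian group $A$ satisfying the Hypothesis with $\pi=\{p\}$. The coinflation map is the first map $\alpha$ in the five-term exact sequence $H_2(G)\xrightarrow{\alpha} H_2(G/K)\to H_1(K)_{G/K}\to H_1(G)\to H_1(G/K)\to 0$ of the extension $1\to K\to G\to G/K\to 1$ (induced by the projection $G\to G/K$); homology is with integer coefficients.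 *)

theory Defs
  imports "HOL-Algebra.Algebra" "HOL-Computational_Algebra.Primes"
begin

definition p1 :: "('g \<times> 'h) set \<Rightarrow> 'g set" where
  "p1 U = {g. \<exists>h. (g, h) \<in> U}"

definition p2 :: "('g \<times> 'h) set \<Rightarrow> 'h set" where
  "p2 U = {h. \<exists>g. (g, h) \<in> U}"

definition k1 :: "('h, 'y) monoid_scheme \<Rightarrow> ('g \<times> 'h) set \<Rightarrow> 'g set" where
  "k1 H U = {g. (g, \<one>\<^bsub>H\<^esub>) \<in> U}"

definition k2 :: "('g, 'x) monoid_scheme \<Rightarrow> ('g \<times> 'h) set \<Rightarrow> 'h set" where
  "k2 G U = {h. (\<one>\<^bsub>G\<^esub>, h) \<in> U}"

definition subdirect_product ::
  "('g, 'x) monoid_scheme \<Rightarrow> ('h, 'y) monoid_scheme \<Rightarrow> ('g \<times> 'h) set \<Rightarrow> bool" where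
  "subdirect_product G H U \<longleftrightarrow>
     subgroup U (G \<times>\<times> H) \<and> p1 U = carrier G \<and> p2 U = carrier H"

text \<open>Chains C_n(Q) = free abelian group on Q^n, realised as integer-valued functions
  on n-tuples vanishing outside carrier Q^n (Q finite). Trivial coefficients Z.\<close>

definition chains2 :: "('q, 'z) monoid_scheme \<Rightarrow> ('q \<times> 'q \<Rightarrow> int) set" where
  "chains2 Q = {c. \<forall>x. x \<notin> carrier Q \<times> carrier Q \<longrightarrow> c x = 0}"

definition chains3 :: "('q, 'z) monoid_scheme \<Rightarrow> ('q \<times> 'q \<times> 'q \<Rightarrow> int) set" where
  "chains3 Q = {d. \<forall>x. x \<notin> carrier Q \<times> carrier Q \<times> carrier Q \<longrightarrow> d x = 0}"

definition bd2 :: "('q, 'z) monoid_scheme \<Rightarrow> ('q \<times> 'q \<Rightarrow> int) \<Rightarrow> 'q \<Rightarrow> int" where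
  "bd2 Q c x = (\<Sum>(g, h) \<in> carrier Q \<times> carrier Q.
      c (g, h) * (of_bool (h = x) - of_bool (g \<otimes>\<^bsub>Q\<^esub> h = x) + of_bool (g = x)))"

definition bd3 :: "('q, 'z) monoid_scheme \<Rightarrow> ('q \<times> 'q \<times> 'q \<Rightarrow> int) \<Rightarrow> 'q \<times> 'q \<Rightarrow> int" where
  "bd3 Q d y = (\<Sum>(a, b, c) \<in> carrier Q \<times> carrier Q \<times> carrier Q.
      d (a, b, c) * (of_bool ((b, c) = y) - of_bool ((a \<otimes>\<^bsub>Q\<^esub> b, c) = y)
                     + of_bool ((a, b \<otimes>\<^bsub>Q\<^esub> c) = y) - of_bool ((a, b) = y)))"

definition cycles2 :: "('q, 'z) monoid_scheme \<Rightarrow> ('q \<times> 'q \<Rightarrow> int) set" where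
  "cycles2 Q = {c \<in> chains2 Q. bd2 Q c = (\<lambda>_. 0)}"

definition boundaries2 :: "('q, 'z) monoid_scheme \<Rightarrow> ('q \<times> 'q \<Rightarrow> int) set" where
  "boundaries2 Q = bd3 Q ` chains3 Q"

text \<open>H_2(Q) = cycles2 Q / boundaries2 Q; two cycles represent the same class iff they are homologous.\<close>
definition homologous2 :: "('q, 'z) monoid_scheme \<Rightarrow> ('q \<times> 'q \<Rightarrow> int) \<Rightarrow> ('q \<times> 'q \<Rightarrow> int) \<Rightarrow> bool" where
  "homologous2 Q z w \<longleftrightarrow> (\<lambda>x. z x - w x) \<in> boundaries2 Q"

definition p_primary_cycle2 :: "nat \<Rightarrow> ('q, 'z) monoid_scheme \<Rightarrow> ('q \<times> 'q \<Rightarrow> int) \<Rightarrow> bool" where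
  "p_primary_cycle2 p Q z \<longleftrightarrow>
     z \<in> cycles2 Q \<and> (\<exists>n::nat. (\<lambda>x. int p ^ n * z x) \<in> boundaries2 Q)"

definition schur_p_part_trivial :: "nat \<Rightarrow> ('q, 'z) monoid_scheme \<Rightarrow> bool" where
  "schur_p_part_trivial p Q \<longleftrightarrow> (\<forall>z. p_primary_cycle2 p Q z \<longrightarrow> z \<in> boundaries2 Q)"

definition chain_map2 ::
  "('g, 'x) monoid_scheme \<Rightarrow> ('g \<Rightarrow> 'q) \<Rightarrow> ('g \<times> 'g \<Rightarrow> int) \<Rightarrow> 'q \<times> 'q \<Rightarrow> int" where
  "chain_map2 G f c = (\<lambda>(a, b). \<Sum>(g, h) \<in> {(g, h) \<in> carrier G \<times> carrier G. f g = a \<and> f h = b}. c (g, h))"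

definition coinflation_p_surjective :: "nat \<Rightarrow> ('g, 'x) monoid_scheme \<Rightarrow> 'g set \<Rightarrow> bool" where
  "coinflation_p_surjective p G K \<longleftrightarrow>
     (\<forall>w. p_primary_cycle2 p (G Mod K) w \<longrightarrow>
        (\<exists>z. p_primary_cycle2 p G z \<and>
             homologous2 (G Mod K) (chain_map2 G (\<lambda>g. K #>\<^bsub>G\<^esub> g) z) w))"

definition torsion_part :: "('a, 'b) monoid_scheme \<Rightarrow> nat \<Rightarrow> 'a set" where
  "torsion_part A n = {a \<in> carrier A. a [^]\<^bsub>A\<^esub> n = \<one>\<^bsub>A\<^esub>}"

text \<open>The Hypothesis with \<pi> = {p}: every n-torsion part is cyclic of order n_p.
  (Uniqueness of \<pi> is then automatic.)\<close>
definition hypothesis_p :: "nat \<Rightarrow> ('a, 'b) monoid_scheme \<Rightarrow> bool" where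
  "hypothesis_p p A \<longleftrightarrow>
     (\<forall>n::nat. n > 0 \<longrightarrow>
        finite (torsion_part A n) \<and> card (torsion_part A n) = p ^ multiplicity p n \<and>
        (\<exists>x \<in> torsion_part A n. torsion_part A n = generate A {x}))"

definition A_extensible ::
  "('g, 'x) monoid_scheme \<Rightarrow> ('h, 'y) monoid_scheme \<Rightarrow> ('g \<times> 'h) set \<Rightarrow> ('a, 'b) monoid_scheme \<Rightarrow> bool" where
  "A_extensible G H U A \<longleftrightarrow>
     (\<forall>f \<in> hom ((G \<times>\<times> H)\<lparr>carrier := U\<rparr>) A.
        \<exists>F \<in> hom (G \<times>\<times> H) A. \<forall>u \<in> U. F u = f u)"

text \<open>p-extensible: A-extensible for every abelian group A (with elements of type 'a)
  satisfying the Hypothesis with \<pi> = {p}. The theorem is stated for an arbitrary type 'a.\<close>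
definition p_extensible ::
  "nat \<Rightarrow> ('g, 'x) monoid_scheme \<Rightarrow> ('h, 'y) monoid_scheme \<Rightarrow> ('g \<times> 'h) set \<Rightarrow> 'a itself \<Rightarrow> bool" where
  "p_extensible p G H U _ \<longleftrightarrow>
     (\<forall>A :: 'a monoid. comm_group A \<and> hypothesis_p p A \<longrightarrow> A_extensible G H U A)"

end

(* Let K = k1 H U and f : U -> A. Since A is abelian and U projects onto G, k |-> f (k, 1) is a
  G-invariant homomorphism phi : K -> A. If phi extends to a : G -> A, then f (g, h) - a g depends
  only on h and is a homomorphism of H, so f extends to G x H.

  To extend phi, fix a transversal s of K in G: phi extends once the factor set
  u (a, b) = phi (s a s b s(ab)^-1) is a coboundary on Q = G/K with trivial coefficients. The
  torsion of A is cyclic of p-power order in every exponent, so u = w^U for an integral cochain U,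
  divisible by |Q|^|Q|, that is a cocycle modulo p^m whose inflation to G is a coboundary modulo
  p^m. Pairing with U kills boundaries and also kills cycles: |Q| annihilates H_2(Q), so a
  prime-to-p multiple of a cycle is p-primary, hence a boundary under (i), or homologous to the
  image of a cycle of G under (ii). A linear form on 2-chains that vanishes on cycles modulo p^m
  and is divisible by |Q|^|Q| factors modulo p^m through the boundary map, which makes U a
  coboundary modulo p^m. *)

theory Submission
  imports Defs "HOL-Algebra.Multiplicative_Group"
begin

section \<open>Torsion of abelian groups satisfying the Hypothesis\<close>

(* In the cyclic group of order p ^ multiplicity p (n * R), the n-torsion consists of R-th multiples. *)
lemma prime_power_dvd_imp_congruent_multiple:
  fixes p n R :: nat and k :: int
  assumes p: "Factorial_Ring.prime p" and "n > 0" "R > 0"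
    and dvd: "int p ^ multiplicity p (n * R) dvd k * int n"
  obtains j where "int p ^ multiplicity p (n * R) dvd int R * j - k"
proof -
  define a where "a = multiplicity p n"
  define b where "b = multiplicity p R"
  have "\<not> is_unit p" using p not_prime_unit by blast
  then obtain n' R' where n': "n = p ^ a * n'" "\<not> p dvd n'" and R': "R = p ^ b * R'" "\<not> p dvd R'"
    using multiplicity_decompose' \<open>n > 0\<close> \<open>R > 0\<close> unfolding a_def b_def by (metis neq0_conv)
  have mult: "multiplicity p (n * R) = a + b"
    unfolding a_def b_def using p \<open>n > 0\<close> \<open>R > 0\<close> by (simp add: prime_elem_multiplicity_mult_distrib)
  have "int p ^ a * int p ^ b dvd int p ^ a * (k * int n')"
    using dvd mult n' by (simp add: power_add algebra_simps)
  then have "int p ^ b dvd k * int n'"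
    using p by (simp add: prime_gt_0_nat)
  moreover have "coprime (int p ^ b) (int n')"
    using p n'(2) by (simp add: prime_imp_coprime)
  ultimately obtain k' where k': "k = int p ^ b * k'"
    by (metis coprime_dvd_mult_left_iff dvdE)
  have "coprime (int R') (int p ^ a)"
    using prime_imp_coprime[OF p R'(2)] by (simp add: coprime_commute)
  then obtain s t where st: "s * int R' + t * int p ^ a = 1"
    using bezout_int by (metis coprime_iff_gcd_eq_1)
  have "int R * (s * k') - k = int p ^ b * k' * (s * int R' - 1)"
    using R' k' by (simp add: algebra_simps)
  also have "\<dots> = int p ^ b * k' * (- t * int p ^ a)"
    using st by (simp only: eq_diff_eq[of _ 1, symmetric]) (simp add: algebra_simps)
  also have "\<dots> = int p ^ (a + b) * (- k' * t)"
    by (simp add: power_add algebra_simps)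
  finally show ?thesis using mult that by (metis dvd_triv_left)
qed

lemma (in comm_group) hypothesis_p_torsion_as_powers:
  fixes n R :: nat
  assumes p: "Factorial_Ring.prime p" and hyp: "hypothesis_p p G" and "n > 0" "R > 0"
  obtains w m where "w \<in> carrier G" "ord w = p ^ m"
    "\<And>y. y \<in> carrier G \<Longrightarrow> y [^] n = \<one> \<Longrightarrow> \<exists>j. y = w [^] (int R * j)"
proof -
  let ?e = "multiplicity p (n * R)"
  obtain w where w: "w \<in> torsion_part G (n * R)" and gen: "torsion_part G (n * R) = generate G {w}"
    and card: "card (torsion_part G (n * R)) = p ^ ?e"
    using hyp \<open>n > 0\<close> \<open>R > 0\<close> unfolding hypothesis_p_def by (metis nat_0_less_mult_iff)
  have wc: "w \<in> carrier G" using w by (simp add: torsion_part_def)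
  have ord: "ord w = p ^ ?e"
    using generate_pow_card[OF wc] gen card by simp
  have "\<exists>j. y = w [^] (int R * j)" if y: "y \<in> carrier G" "y [^] n = \<one>" for y
  proof -
    have "y \<in> torsion_part G (n * R)"
      using y by (simp add: torsion_part_def nat_pow_pow[symmetric])
    then obtain k :: int where k: "y = w [^] k"
      using gen generate_pow[OF wc] by auto
    have "w [^] (k * int n) = \<one>"
      using y k wc by (simp add: int_pow_pow[symmetric] int_pow_int)
    then have "int p ^ ?e dvd k * int n"
      using int_pow_eq_id[OF wc] ord by simp
    then obtain j where "int p ^ ?e dvd int R * j - k"
      using prime_power_dvd_imp_congruent_multiple p \<open>n > 0\<close> \<open>R > 0\<close> by blast
    then show ?thesis
      using k int_pow_eq[OF wc] ord by auto
  qed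
  then show ?thesis using that wc ord by blast
qed

section \<open>The bar complex in degrees up to three\<close>

lemma bd2_diff_scale: "bd2 Q (\<lambda>i. x i - k * z i) y = bd2 Q x y - k * bd2 Q z y"
  unfolding bd2_def by (simp add: case_prod_beta sum_subtractf sum_distrib_left algebra_simps)

lemma bd2_outside: "group Q \<Longrightarrow> y \<notin> carrier Q \<Longrightarrow> bd2 Q z y = 0"
  unfolding bd2_def by (intro sum.neutral) (auto simp: group.is_monoid monoid.m_closed)

lemma cycles2_scale:
  assumes "z \<in> cycles2 Q"
  shows "(\<lambda>y. c * z y) \<in> cycles2 Q"
proof -
  have "bd2 Q (\<lambda>y. c * z y) y = c * bd2 Q z y" for y
    unfolding bd2_def by (simp add: case_prod_beta sum_distrib_left algebra_simps)
  then show ?thesis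
    using assms by (auto simp: cycles2_def chains2_def)
qed

lemma bd2_adjoint:
  assumes "group Q" "finite (carrier Q)"
  shows "(\<Sum>y\<in>carrier Q. E y * bd2 Q z y) =
    (\<Sum>(g, h)\<in>carrier Q \<times> carrier Q. z (g, h) * (E h - E (g \<otimes>\<^bsub>Q\<^esub> h) + E g))"
proof -
  have "(\<Sum>y\<in>carrier Q. E y * bd2 Q z y) = (\<Sum>(g, h)\<in>carrier Q \<times> carrier Q. \<Sum>y\<in>carrier Q.
      z (g, h) * (E y * of_bool (h = y) - E y * of_bool (g \<otimes>\<^bsub>Q\<^esub> h = y) + E y * of_bool (g = y)))"
    unfolding bd2_def sum_distrib_left by (subst sum.swap) (simp add: case_prod_beta algebra_simps)
  also have "\<dots> = (\<Sum>(g, h)\<in>carrier Q \<times> carrier Q. z (g, h) * (E h - E (g \<otimes>\<^bsub>Q\<^esub> h) + E g))"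
    using assms by (intro sum.cong refl)
      (auto simp: sum_subtractf sum.distrib sum_distrib_left[symmetric] group.is_monoid monoid.m_closed)
  finally show ?thesis .
qed

lemma bd3_adjoint:
  assumes "group Q" "finite (carrier Q)"
  shows "(\<Sum>y\<in>carrier Q \<times> carrier Q. V y * bd3 Q d y) =
    (\<Sum>(a, b, c)\<in>carrier Q \<times> carrier Q \<times> carrier Q.
      d (a, b, c) * (V (b, c) - V (a \<otimes>\<^bsub>Q\<^esub> b, c) + V (a, b \<otimes>\<^bsub>Q\<^esub> c) - V (a, b)))"
proof -
  have "(\<Sum>y\<in>carrier Q \<times> carrier Q. V y * bd3 Q d y) =
    (\<Sum>(a, b, c)\<in>carrier Q \<times> carrier Q \<times> carrier Q. \<Sum>y\<in>carrier Q \<times> carrier Q.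
      d (a, b, c) * (V y * of_bool ((b, c) = y) - V y * of_bool ((a \<otimes>\<^bsub>Q\<^esub> b, c) = y)
        + V y * of_bool ((a, b \<otimes>\<^bsub>Q\<^esub> c) = y) - V y * of_bool ((a, b) = y)))"
    unfolding bd3_def sum_distrib_left by (subst sum.swap) (simp add: case_prod_beta algebra_simps)
  also have "\<dots> = (\<Sum>(a, b, c)\<in>carrier Q \<times> carrier Q \<times> carrier Q.
      d (a, b, c) * (V (b, c) - V (a \<otimes>\<^bsub>Q\<^esub> b, c) + V (a, b \<otimes>\<^bsub>Q\<^esub> c) - V (a, b)))"
    using assms by (intro sum.cong refl)
      (auto simp: sum_subtractf sum.distrib sum_distrib_left[symmetric] group.is_monoid monoid.m_closed)
  finally show ?thesis .
qed

lemma chain_map2_adjoint: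
  assumes "finite (carrier G)" "finite S" "f ` carrier G \<subseteq> S"
  shows "(\<Sum>y\<in>S \<times> S. V y * chain_map2 G f z y) =
    (\<Sum>(g, h)\<in>carrier G \<times> carrier G. z (g, h) * V (f g, f h))"
proof -
  let ?F = "\<lambda>(g, h). (f g, f h)"
  have "(\<Sum>y\<in>S \<times> S. V y * chain_map2 G f z y) =
    (\<Sum>y\<in>S \<times> S. \<Sum>x\<in>{x \<in> carrier G \<times> carrier G. ?F x = y}. z x * V (?F x))"
  proof (rule sum.cong[OF refl], clarify)
    fix a b
    have "{(g, h) \<in> carrier G \<times> carrier G. f g = a \<and> f h = b} = {x \<in> carrier G \<times> carrier G. ?F x = (a, b)}"
      by auto
    then show "V (a, b) * chain_map2 G f z (a, b) =
      (\<Sum>x\<in>{x \<in> carrier G \<times> carrier G. ?F x = (a, b)}. z x * V (?F x))"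
      unfolding chain_map2_def by (simp add: sum_distrib_left ac_simps)
  qed
  also have "\<dots> = (\<Sum>x\<in>carrier G \<times> carrier G. z x * V (?F x))"
    using assms by (intro sum.group) auto
  finally show ?thesis by (simp add: case_prod_beta)
qed

lemma (in group) left_mult_solutions:
  "a \<in> carrier G \<Longrightarrow> y \<in> carrier G \<Longrightarrow> carrier G \<inter> {x. a \<otimes> x = y} = {inv a \<otimes> y}"
  by (auto simp: inv_solve_left m_assoc[symmetric])

lemma bd2_row:
  assumes "group Q" "finite (carrier Q)" "g \<in> carrier Q" "y \<in> carrier Q"
  shows "bd2 Q (\<lambda>(a, b). of_bool (a = g \<and> b \<in> carrier Q)) y = (if y = g then int (card (carrier Q)) else 0)"
proof -
  have "bd2 Q (\<lambda>(a, b). of_bool (a = g \<and> b \<in> carrier Q)) y = (\<Sum>a\<in>carrier Q.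
      if a = g then (\<Sum>b\<in>carrier Q. of_bool (b = y) - of_bool (a \<otimes>\<^bsub>Q\<^esub> b = y) + of_bool (a = y)) else 0)"
    unfolding bd2_def sum.cartesian_product[symmetric] by (intro sum.cong refl) auto
  also have "\<dots> = (\<Sum>b\<in>carrier Q. of_bool (b = y) - of_bool (g \<otimes>\<^bsub>Q\<^esub> b = y) + of_bool (g = y))"
    using assms(2,3) by (subst sum.delta) simp_all
  also have "\<dots> = (if y = g then int (card (carrier Q)) else 0)"
    using assms by (simp add: sum.distrib sum_subtractf group.left_mult_solutions)
  finally show ?thesis .
qed

lemma card_mult_cycle2_in_boundaries2:
  assumes Q: "group Q" "finite (carrier Q)" and z: "z \<in> cycles2 Q"
  shows "(\<lambda>y. int (card (carrier Q)) * z y) \<in> boundaries2 Q"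
proof -
  let ?N = "int (card (carrier Q))"
  define d where "d = (\<lambda>(a, b, c). if (a, b, c) \<in> carrier Q \<times> carrier Q \<times> carrier Q then - z (a, b) else 0)"
  have "bd3 Q d y = ?N * z y" for y
  proof (cases "y \<in> carrier Q \<times> carrier Q")
    case False
    then have "z y = 0"
      using z unfolding cycles2_def chains2_def by blast
    moreover have "bd3 Q d y = 0"
      unfolding bd3_def using False Q(1)
      by (intro sum.neutral) (auto simp: d_def group.is_monoid monoid.m_closed)
    ultimately show ?thesis by simp
  next
    case True
    then obtain y1 y2 where y: "y = (y1, y2)" "y1 \<in> carrier Q" "y2 \<in> carrier Q" by auto
    have "bd3 Q d y = (\<Sum>a\<in>carrier Q. \<Sum>b\<in>carrier Q. - z (a, b) * (\<Sum>c\<in>carrier Q.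
        of_bool (b = y1) * of_bool (c = y2) - of_bool (a \<otimes>\<^bsub>Q\<^esub> b = y1) * of_bool (c = y2)
        + of_bool (a = y1) * of_bool (b \<otimes>\<^bsub>Q\<^esub> c = y2) - of_bool (a = y1) * of_bool (b = y2)))"
      unfolding bd3_def sum.cartesian_product[symmetric] using y
      by (auto simp: d_def sum_distrib_left intro!: sum.cong)
    also have "\<dots> = (\<Sum>a\<in>carrier Q. \<Sum>b\<in>carrier Q. - z (a, b) *
        (of_bool (b = y1) - of_bool (a \<otimes>\<^bsub>Q\<^esub> b = y1) + of_bool (a = y1) - ?N * of_bool ((a, b) = y)))"
      using Q y by (intro sum.cong refl) (simp add: sum.distrib sum_subtractf group.left_mult_solutions)
    also have "\<dots> = - bd2 Q z y1 + ?N * z y"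
    proof -
      have zy: "(\<Sum>a\<in>carrier Q. \<Sum>b\<in>carrier Q. ?N * (z (a, b) * of_bool (a = y1 \<and> b = y2))) = ?N * z y"
        using Q y by (simp add: of_bool_conj mult.assoc[symmetric] sum_distrib_right[symmetric]
            flip: sum_distrib_left)
      show ?thesis
        unfolding bd2_def sum.cartesian_product[symmetric] using Q y
        by (simp add: algebra_simps sum.distrib sum_subtractf sum_distrib_left sum_negf zy)
    qed
    finally show ?thesis
      using z y by (simp add: cycles2_def)
  qed
  moreover have "d \<in> chains3 Q"
    by (auto simp: chains3_def d_def)
  ultimately show ?thesis
    unfolding boundaries2_def by (metis (no_types) ext image_eqI)
qed

lemma p_primary_multiple_of_cycle2:
  assumes p: "Factorial_Ring.prime p" and Q: "group Q" "finite (carrier Q)" and z: "z \<in> cycles2 Q"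
  obtains N' where "\<not> p dvd N'" "p_primary_cycle2 p Q (\<lambda>y. int N' * z y)"
proof -
  have "card (carrier Q) \<noteq> 0"
    using Q monoid.one_closed[OF group.is_monoid[OF Q(1)]] by auto
  moreover have "\<not> is_unit p" using p not_prime_unit by blast
  ultimately obtain N' where N: "card (carrier Q) = p ^ multiplicity p (card (carrier Q)) * N'"
    and "\<not> p dvd N'"
    by (rule multiplicity_decompose')
  define v where "v = multiplicity p (card (carrier Q))"
  have "(\<lambda>y. int p ^ v * (int N' * z y)) = (\<lambda>y. int (card (carrier Q)) * z y)"
    by (subst N) (simp add: v_def mult.assoc)
  then have "(\<lambda>y. int p ^ v * (int N' * z y)) \<in> boundaries2 Q"
    using card_mult_cycle2_in_boundaries2[OF Q z] by simp
  then have "p_primary_cycle2 p Q (\<lambda>y. int N' * z y)"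
    using cycles2_scale[OF z] unfolding p_primary_cycle2_def by blast
  with \<open>\<not> p dvd N'\<close> show ?thesis by (rule that)
qed

section \<open>Linear forms vanishing on a kernel\<close>

lemma int_submodule_principal:
  fixes I :: "int set"
  assumes closed: "\<And>a b k. a \<in> I \<Longrightarrow> b \<in> I \<Longrightarrow> a - k * b \<in> I" and "n \<in> I" "n > 0"
  obtains m where "m \<in> I" "m > 0" "\<And>a. a \<in> I \<Longrightarrow> m dvd a"
proof -
  define m where "m = (LEAST k :: nat. k > 0 \<and> int k \<in> I)"
  have "nat n > 0 \<and> int (nat n) \<in> I" using assms by simp
  then have m: "m > 0" "int m \<in> I" and least: "\<And>k. 0 < k \<Longrightarrow> int k \<in> I \<Longrightarrow> m \<le> k"
    unfolding m_def by (metis (mono_tags, lifting) LeastI Least_le)+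
  have "int m dvd a" if "a \<in> I" for a
  proof -
    have "a mod int m \<in> I"
      using closed[OF that m(2), of "a div int m"] by (simp add: minus_div_mult_eq_mod)
    moreover have "0 \<le> a mod int m" "a mod int m < int m" using m by simp_all
    ultimately have "a mod int m = 0"
      using least[of "nat (a mod int m)"] by fastforce
    then show ?thesis by (simp add: dvd_eq_mod_eq_0)
  qed
  then show ?thesis using that m by auto
qed

(* Coordinates of B are eliminated one at a time; the values of the eliminated coordinate on the
  admissible chains form the ideal generated by a divisor of N, which costs one factor N. *)
context
  fixes Xs :: "('i \<Rightarrow> int) set" and L :: "('i \<Rightarrow> int) \<Rightarrow> 'q \<Rightarrow> int" and V :: "('i \<Rightarrow> int) \<Rightarrow> int"
    and B :: "'q set" and N P :: int
  assumes closed: "\<And>x y k. x \<in> Xs \<Longrightarrow> y \<in> Xs \<Longrightarrow> (\<lambda>i. x i - k * y i) \<in> Xs"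
    and L_diff_scale: "\<And>x y k j. x \<in> Xs \<Longrightarrow> y \<in> Xs \<Longrightarrow> L (\<lambda>i. x i - k * y i) j = L x j - k * L y j"
    and V_diff_scale: "\<And>x y k. x \<in> Xs \<Longrightarrow> y \<in> Xs \<Longrightarrow> V (\<lambda>i. x i - k * y i) = V x - k * V y"
    and V_kernel: "\<And>x. x \<in> Xs \<Longrightarrow> \<forall>j\<in>B. L x j = 0 \<Longrightarrow> P dvd V x"
    and L_hits_multiples: "\<And>g. g \<in> B \<Longrightarrow> \<exists>x\<in>Xs. L x g = N \<and> (\<forall>j\<in>B. j \<noteq> g \<longrightarrow> L x j = 0)"
    and N_pos: "N > 0"
    and V_divisible: "\<And>x. x \<in> Xs \<Longrightarrow> N ^ card B dvd V x"
    and finite_B: "finite B"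
begin

lemma coordinate_generator:
  assumes "T \<subseteq> B" "s \<in> T"
  obtains x0 m where "x0 \<in> Xs" "\<forall>j\<in>B - T. L x0 j = 0" "L x0 s = m" "m dvd N"
    and "\<And>x. x \<in> Xs \<Longrightarrow> \<forall>j\<in>B - T. L x j = 0 \<Longrightarrow> m dvd L x s"
proof -
  define J where "J = {x \<in> Xs. \<forall>j\<in>B - T. L x j = 0}"
  have "a - k * b \<in> (\<lambda>x. L x s) ` J" if "a \<in> (\<lambda>x. L x s) ` J" "b \<in> (\<lambda>x. L x s) ` J" for a b k
  proof -
    from that obtain x y where "x \<in> J" "y \<in> J" "a = L x s" "b = L y s" by blast
    then show ?thesis
      unfolding J_def by (intro image_eqI[of _ _ "\<lambda>i. x i - k * y i"]) (auto simp: closed L_diff_scale)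
  qed
  moreover have "N \<in> (\<lambda>x. L x s) ` J"
    using L_hits_multiples[of s] assms unfolding J_def by force
  ultimately obtain m where "m \<in> (\<lambda>x. L x s) ` J" "\<And>a. a \<in> (\<lambda>x. L x s) ` J \<Longrightarrow> m dvd a"
    using int_submodule_principal N_pos by metis
  then show ?thesis
    using that \<open>N \<in> (\<lambda>x. L x s) ` J\<close> unfolding J_def by blast
qed

lemma linear_form_factors_mod_step:
  assumes S: "S \<subseteq> B" "s \<in> B - S"
    and C_dvd: "\<forall>g. N ^ (card B - card S) dvd C g"
    and C_factors: "\<forall>x\<in>Xs. (\<forall>j\<in>B - S. L x j = 0) \<longrightarrow> P dvd (\<Sum>g\<in>S. C g * L x g) - V x"
  shows "\<exists>C'. (\<forall>g. N ^ (card B - card (insert s S)) dvd C' g) \<and>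
    (\<forall>x\<in>Xs. (\<forall>j\<in>B - insert s S. L x j = 0) \<longrightarrow> P dvd (\<Sum>g\<in>insert s S. C' g * L x g) - V x)"
proof -
  have fin: "finite S" and s: "s \<in> B" "s \<notin> S"
    using S finite_B by (auto intro: finite_subset)
  define t where "t = card B - card (insert s S)"
  have "card (insert s S) \<le> card B"
    using S finite_B by (intro card_mono) auto
  then have card: "card B - card S = Suc t"
    using fin s by (simp add: t_def)
  obtain x0 m where x0: "x0 \<in> Xs" "\<forall>j\<in>B - insert s S. L x0 j = 0" "L x0 s = m" and "m dvd N"
    and m_dvd: "\<And>x. x \<in> Xs \<Longrightarrow> \<forall>j\<in>B - insert s S. L x j = 0 \<Longrightarrow> m dvd L x s"
    using coordinate_generator[of "insert s S" s] S by blast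
  define y where "y = V x0 - (\<Sum>g\<in>S. C g * L x0 g)"
  have "N ^ Suc t dvd N ^ card B"
    using card by (intro le_imp_power_dvd) simp
  then have "N ^ Suc t dvd y"
    unfolding y_def using V_divisible[OF x0(1)] C_dvd card
    by (intro dvd_diff dvd_sum dvd_mult2) (auto intro: dvd_trans)
  moreover have "m * N ^ t dvd N ^ Suc t"
    using \<open>m dvd N\<close> by (simp add: mult_dvd_mono)
  ultimately obtain e where e: "y = m * (N ^ t * e)"
    by (metis dvd_trans dvdE mult.assoc)
  define C' where "C' = C(s := N ^ t * e)"
  have "N ^ t dvd C' g" for g
    using C_dvd card unfolding C'_def by (metis dvd_mult_right dvd_triv_left fun_upd_apply power_Suc)
  moreover have "P dvd (\<Sum>g\<in>insert s S. C' g * L x g) - V x"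
    if x: "x \<in> Xs" "\<forall>j\<in>B - insert s S. L x j = 0" for x
  proof -
    obtain k where k: "L x s = m * k" using m_dvd[OF x] by (elim dvdE)
    define x' where "x' = (\<lambda>i. x i - k * x0 i)"
    have "x' \<in> Xs" using x x0 by (simp add: x'_def closed)
    moreover have "L x' j = 0" if "j \<in> B - S" for j
      using that x x0 k by (cases "j = s") (auto simp: x'_def L_diff_scale)
    ultimately have "P dvd (\<Sum>g\<in>S. C g * L x' g) - V x'" using C_factors by blast
    also have "(\<Sum>g\<in>S. C g * L x' g) - V x' = (\<Sum>g\<in>S. C g * L x g) - V x + k * y"
      using x x0 unfolding x'_def y_def
      by (simp add: L_diff_scale V_diff_scale sum_subtractf sum_distrib_left algebra_simps)
    also have "\<dots> = (\<Sum>g\<in>insert s S. C' g * L x g) - V x"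
    proof -
      have "(\<Sum>g\<in>S. C' g * L x g) = (\<Sum>g\<in>S. C g * L x g)"
        using s by (intro sum.cong) (auto simp: C'_def)
      then show ?thesis using fin s e k x0(3) by (simp add: C'_def algebra_simps)
    qed
    finally show ?thesis .
  qed
  ultimately show ?thesis unfolding t_def by blast
qed

lemma linear_form_factors_mod:
  obtains C where "\<And>x. x \<in> Xs \<Longrightarrow> P dvd (\<Sum>g\<in>B. C g * L x g) - V x"
proof -
  have "\<exists>C. (\<forall>g. N ^ (card B - card S) dvd C g) \<and>
      (\<forall>x\<in>Xs. (\<forall>j\<in>B - S. L x j = 0) \<longrightarrow> P dvd (\<Sum>g\<in>S. C g * L x g) - V x)"
    if "finite S" "S \<subseteq> B" for S
    using that
  proof (induction S rule: finite_induct)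
    case empty
    show ?case
      by (rule exI[of _ "\<lambda>_. 0"]) (simp add: V_kernel)
  next
    case (insert s S)
    then obtain C where "\<forall>g. N ^ (card B - card S) dvd C g"
      "\<forall>x\<in>Xs. (\<forall>j\<in>B - S. L x j = 0) \<longrightarrow> P dvd (\<Sum>g\<in>S. C g * L x g) - V x"
      by auto
    then show ?case
      using linear_form_factors_mod_step[of S s C] insert.hyps insert.prems by blast
  qed
  from this[OF finite_B subset_refl] show ?thesis
    using that by auto
qed

end

section \<open>Integral 2-cocycles modulo a prime power\<close>

lemma coboundary_mod_of_vanishing_on_cycles2:
  assumes Q: "group Q" "finite (carrier Q)"
    and U_dvd: "\<And>q. int (card (carrier Q)) ^ card (carrier Q) dvd U q"
    and U_cycles: "\<And>z. z \<in> cycles2 Q \<Longrightarrow> P dvd (\<Sum>q\<in>carrier Q \<times> carrier Q. U q * z q)"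
  obtains C where "\<And>a b. a \<in> carrier Q \<Longrightarrow> b \<in> carrier Q \<Longrightarrow> P dvd C a + C b - C (a \<otimes>\<^bsub>Q\<^esub> b) - U (a, b)"
proof -
  define V where "V z = (\<Sum>q\<in>carrier Q \<times> carrier Q. U q * z q)" for z :: "_ \<Rightarrow> int"
  obtain C where C: "\<And>z. z \<in> chains2 Q \<Longrightarrow> P dvd (\<Sum>g\<in>carrier Q. C g * bd2 Q z g) - V z"
  proof (rule linear_form_factors_mod[where Xs = "chains2 Q" and L = "bd2 Q" and V = V and B = "carrier Q"
        and N = "int (card (carrier Q))" and P = P])
    show "V (\<lambda>i. x i - k * y i) = V x - k * V y" for x y k
      unfolding V_def by (simp add: sum_subtractf sum_distrib_left algebra_simps)
    show "P dvd V z" if "z \<in> chains2 Q" "\<forall>j\<in>carrier Q. bd2 Q z j = 0" for z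
      using that bd2_outside[OF Q(1)] unfolding V_def by (intro U_cycles) (auto simp: cycles2_def)
    show "\<exists>z\<in>chains2 Q. bd2 Q z g = int (card (carrier Q)) \<and> (\<forall>j\<in>carrier Q. j \<noteq> g \<longrightarrow> bd2 Q z j = 0)"
      if "g \<in> carrier Q" for g
      using that bd2_row[OF Q that] by (intro bexI[of _ "\<lambda>(a, b). of_bool (a = g \<and> b \<in> carrier Q)"])
        (auto simp: chains2_def)
    show "int (card (carrier Q)) ^ card (carrier Q) dvd V z" for z
      unfolding V_def by (intro dvd_sum dvd_mult2 U_dvd)
  qed (use Q monoid.one_closed[OF group.is_monoid[OF Q(1)]] in \<open>auto simp: chains2_def bd2_diff_scale card_gt_0_iff\<close>)
  have "P dvd C a + C b - C (a \<otimes>\<^bsub>Q\<^esub> b) - U (a, b)" if ab: "a \<in> carrier Q" "b \<in> carrier Q" for a b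
  proof -
    define z :: "_ \<Rightarrow> int" where "z q = of_bool (q = (a, b))" for q
    have ab_only: "carrier Q \<times> carrier Q \<inter> {q. q = (a, b)} = {(a, b)}" using ab by auto
    have "z \<in> chains2 Q" using ab by (auto simp: chains2_def z_def)
    then have "P dvd (\<Sum>g\<in>carrier Q. C g * bd2 Q z g) - V z" by (rule C)
    also have "(\<Sum>g\<in>carrier Q. C g * bd2 Q z g) = C b - C (a \<otimes>\<^bsub>Q\<^esub> b) + C a"
      using ab Q by (simp add: bd2_adjoint z_def sum.cartesian_product[symmetric] of_bool_conj mult.assoc
          sum_distrib_left[symmetric])
    also have "V z = U (a, b)"
      using ab_only Q(2) by (simp add: V_def z_def)
    finally show ?thesis by (simp add: algebra_simps)
  qed
  then show ?thesis using that by blast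
qed

lemma cocycle_mod_pairing_boundaries2:
  fixes P :: int
  assumes Q: "group Q" "finite (carrier Q)"
    and U_cocycle: "\<And>a b c. a \<in> carrier Q \<Longrightarrow> b \<in> carrier Q \<Longrightarrow> c \<in> carrier Q \<Longrightarrow>
      P dvd U (b, c) - U (a \<otimes>\<^bsub>Q\<^esub> b, c) + U (a, b \<otimes>\<^bsub>Q\<^esub> c) - U (a, b)"
    and "w \<in> boundaries2 Q"
  shows "P dvd (\<Sum>q\<in>carrier Q \<times> carrier Q. U q * w q)"
proof -
  obtain d where "w = bd3 Q d" using \<open>w \<in> boundaries2 Q\<close> by (auto simp: boundaries2_def)
  then show ?thesis
    unfolding \<open>w = bd3 Q d\<close> bd3_adjoint[OF Q] by (intro dvd_sum) (auto intro!: dvd_mult U_cocycle)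
qed

lemma (in group) cocycle_mod_of_inflation:
  fixes P :: int
  assumes f: "f \<in> hom G Q" "f ` carrier G = carrier Q"
    and infl: "\<And>g h. g \<in> carrier G \<Longrightarrow> h \<in> carrier G \<Longrightarrow> P dvd E (g \<otimes> h) - E g - E h - U (f g, f h)"
    and "a \<in> carrier Q" "b \<in> carrier Q" "c \<in> carrier Q"
  shows "P dvd U (b, c) - U (a \<otimes>\<^bsub>Q\<^esub> b, c) + U (a, b \<otimes>\<^bsub>Q\<^esub> c) - U (a, b)"
proof -
  obtain g h k where ghk: "g \<in> carrier G" "h \<in> carrier G" "k \<in> carrier G" "a = f g" "b = f h" "c = f k"
    using \<open>a \<in> carrier Q\<close> \<open>b \<in> carrier Q\<close> \<open>c \<in> carrier Q\<close> unfolding f(2)[symmetric] by (elim imageE)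
  have f_mult: "f (x \<otimes> y) = f x \<otimes>\<^bsub>Q\<^esub> f y" if "x \<in> carrier G" "y \<in> carrier G" for x y
    using f(1) that by (simp add: hom_mult)
  have d1: "P dvd E (h \<otimes> k) - E h - E k - U (b, c)"
    using infl[of h k] ghk by simp
  have d2: "P dvd E (g \<otimes> h \<otimes> k) - E (g \<otimes> h) - E k - U (a \<otimes>\<^bsub>Q\<^esub> b, c)"
    using infl[of "g \<otimes> h" k] ghk by (simp add: f_mult)
  have d3: "P dvd E (g \<otimes> (h \<otimes> k)) - E g - E (h \<otimes> k) - U (a, b \<otimes>\<^bsub>Q\<^esub> c)"
    using infl[of g "h \<otimes> k"] ghk by (simp add: f_mult)
  have d4: "P dvd E (g \<otimes> h) - E g - E h - U (a, b)"
    using infl[of g h] ghk by simp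
  have "P dvd (E (g \<otimes> h \<otimes> k) - E (g \<otimes> h) - E k - U (a \<otimes>\<^bsub>Q\<^esub> b, c))
      - (E (h \<otimes> k) - E h - E k - U (b, c))
      - (E (g \<otimes> (h \<otimes> k)) - E g - E (h \<otimes> k) - U (a, b \<otimes>\<^bsub>Q\<^esub> c)) + (E (g \<otimes> h) - E g - E h - U (a, b))"
    by (rule dvd_add[OF dvd_diff[OF dvd_diff[OF d2 d1] d3] d4])
  moreover have "g \<otimes> h \<otimes> k = g \<otimes> (h \<otimes> k)"
    using ghk by (simp add: m_assoc)
  ultimately show ?thesis
    by (simp add: algebra_simps)
qed

lemma inflated_coboundary_mod_pairing_cycles2:
  fixes P :: int
  assumes G: "group G" "finite (carrier G)" and S: "finite S" "f ` carrier G \<subseteq> S"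
    and infl: "\<And>g h. g \<in> carrier G \<Longrightarrow> h \<in> carrier G \<Longrightarrow> P dvd E (g \<otimes>\<^bsub>G\<^esub> h) - E g - E h - U (f g, f h)"
    and z: "z \<in> cycles2 G"
  shows "P dvd (\<Sum>q\<in>S \<times> S. U q * chain_map2 G f z q)"
proof -
  have "(\<Sum>(g, h)\<in>carrier G \<times> carrier G. z (g, h) * (E h - E (g \<otimes>\<^bsub>G\<^esub> h) + E g)) = 0"
    using bd2_adjoint[OF G, of E z] z by (simp add: cycles2_def)
  then have "(\<Sum>q\<in>S \<times> S. U q * chain_map2 G f z q) =
      (\<Sum>(g, h)\<in>carrier G \<times> carrier G. z (g, h) * U (f g, f h)) +
      (\<Sum>(g, h)\<in>carrier G \<times> carrier G. z (g, h) * (E h - E (g \<otimes>\<^bsub>G\<^esub> h) + E g))"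
    by (simp add: chain_map2_adjoint[OF G(2) S])
  also have "\<dots> = (\<Sum>(g, h)\<in>carrier G \<times> carrier G. z (g, h) * (U (f g, f h) + E h - E (g \<otimes>\<^bsub>G\<^esub> h) + E g))"
    unfolding sum.distrib[symmetric] by (intro sum.cong) (auto simp: algebra_simps)
  also have "P dvd \<dots>"
  proof (intro dvd_sum, clarify)
    fix g h assume "g \<in> carrier G" "h \<in> carrier G"
    then have "P dvd - (E (g \<otimes>\<^bsub>G\<^esub> h) - E g - E h - U (f g, f h))"
      unfolding dvd_minus_iff by (rule infl)
    then show "P dvd z (g, h) * (U (f g, f h) + E h - E (g \<otimes>\<^bsub>G\<^esub> h) + E g)"
      by (intro dvd_mult) (simp add: algebra_simps)
  qed
  finally show ?thesis .
qed

lemma (in normal) inflated_coboundary_mod_vanishes_on_p_primary_cycles2: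
  fixes P :: int
  assumes fin: "finite (carrier G)"
    and infl: "\<And>g h. g \<in> carrier G \<Longrightarrow> h \<in> carrier G \<Longrightarrow> P dvd E (g \<otimes> h) - E g - E h - U (H #> g, H #> h)"
    and cond: "schur_p_part_trivial p (G Mod H) \<or> coinflation_p_surjective p G H"
    and w: "p_primary_cycle2 p (G Mod H) w"
  shows "P dvd (\<Sum>q\<in>carrier (G Mod H) \<times> carrier (G Mod H). U q * w q)"
proof -
  define Q where "Q = G Mod H"
  define pair where "pair z = (\<Sum>q\<in>carrier Q \<times> carrier Q. U q * z q)" for z :: "_ \<Rightarrow> int"
  have Q: "group Q" "finite (carrier Q)"
    using factorgroup_is_group fin by (simp_all add: Q_def carrier_FactGroup)
  have \<pi>: "(\<lambda>g. H #> g) \<in> hom G Q" "(\<lambda>g. H #> g) ` carrier G = carrier Q"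
    using r_coset_hom_Mod by (simp_all add: Q_def carrier_FactGroup)
  have boundaries: "P dvd pair z" if "z \<in> boundaries2 Q" for z
    unfolding pair_def using Q that cocycle_mod_of_inflation[OF \<pi> infl]
    by (intro cocycle_mod_pairing_boundaries2) auto
  have "P dvd pair w"
    using cond unfolding Q_def[symmetric]
  proof
    assume "schur_p_part_trivial p Q"
    then show ?thesis
      using w boundaries by (simp add: schur_p_part_trivial_def Q_def)
  next
    assume "coinflation_p_surjective p G H"
    then obtain z where "p_primary_cycle2 p G z" and hom: "homologous2 Q (chain_map2 G (\<lambda>g. H #> g) z) w"
      using w unfolding coinflation_p_surjective_def Q_def by blast
    define c where "c = chain_map2 G (\<lambda>g. H #> g) z"
    have "P dvd pair c"
      unfolding pair_def c_def using is_group fin \<pi> infl Q(2) \<open>p_primary_cycle2 p G z\<close>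
      by (intro inflated_coboundary_mod_pairing_cycles2) (auto simp: p_primary_cycle2_def)
    moreover have "P dvd pair (\<lambda>y. c y - w y)"
      using hom boundaries by (simp add: homologous2_def c_def)
    moreover have "pair (\<lambda>y. c y - w y) = pair c - pair w"
      unfolding pair_def by (simp add: sum_subtractf right_diff_distrib)
    ultimately show ?thesis
      using dvd_diff[of P "pair c" "pair c - pair w"] by simp
  qed
  then show ?thesis
    by (simp add: pair_def Q_def)
qed

lemma (in normal) inflated_coboundary_mod_vanishes_on_cycles2:
  fixes p m :: nat
  assumes p: "Factorial_Ring.prime p" and fin: "finite (carrier G)"
    and infl: "\<And>g h. g \<in> carrier G \<Longrightarrow> h \<in> carrier G \<Longrightarrow>
      int p ^ m dvd E (g \<otimes> h) - E g - E h - U (H #> g, H #> h)"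
    and cond: "schur_p_part_trivial p (G Mod H) \<or> coinflation_p_surjective p G H"
    and z: "z \<in> cycles2 (G Mod H)"
  shows "int p ^ m dvd (\<Sum>q\<in>carrier (G Mod H) \<times> carrier (G Mod H). U q * z q)"
proof -
  have Q: "group (G Mod H)" "finite (carrier (G Mod H))"
    using factorgroup_is_group fin by (simp_all add: carrier_FactGroup)
  obtain N' where "\<not> p dvd N'" and primary: "p_primary_cycle2 p (G Mod H) (\<lambda>y. int N' * z y)"
    using p_primary_multiple_of_cycle2[OF p Q z] by blast
  have "int p ^ m dvd (\<Sum>q\<in>carrier (G Mod H) \<times> carrier (G Mod H). U q * (int N' * z q))"
    using inflated_coboundary_mod_vanishes_on_p_primary_cycles2[OF fin infl cond primary] by simp
  moreover have "coprime (int p ^ m) (int N')"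
    using prime_imp_coprime[OF p \<open>\<not> p dvd N'\<close>] by simp
  ultimately show ?thesis
    by (simp add: mult.left_commute coprime_dvd_mult_right_iff flip: sum_distrib_left)
qed

section \<open>Extending invariant homomorphisms from a normal subgroup\<close>

lemma (in normal) mult_inv_mem_of_rcos_eq:
  "x \<in> carrier G \<Longrightarrow> y \<in> carrier G \<Longrightarrow> H #> x = H #> y \<Longrightarrow> x \<otimes> inv y \<in> H"
  by (metis is_group rcos_module_imp rcos_self subgroup_axioms)

locale normal_transversal = normal H G for H and G (structure) +
  fixes s :: "'a set \<Rightarrow> 'a"
  assumes s_closed: "q \<in> carrier (G Mod H) \<Longrightarrow> s q \<in> carrier G"
    and rcos_s: "q \<in> carrier (G Mod H) \<Longrightarrow> H #> s q = q"
    and s_one: "s H = \<one>"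
begin

definition kappa :: "'a \<Rightarrow> 'a" where
  "kappa g = g \<otimes> inv (s (H #> g))"

definition factor_set :: "'a set \<Rightarrow> 'a set \<Rightarrow> 'a" where
  "factor_set a b = s a \<otimes> s b \<otimes> inv (s (a <#> b))"

lemma rcos_closed: "g \<in> carrier G \<Longrightarrow> H #> g \<in> carrier (G Mod H)"
  by (auto simp: carrier_FactGroup)

lemma kappa_mem: "g \<in> carrier G \<Longrightarrow> kappa g \<in> H"
  unfolding kappa_def using s_closed rcos_s rcos_closed by (simp add: mult_inv_mem_of_rcos_eq)

lemma kappa_of_mem: "k \<in> H \<Longrightarrow> kappa k = k"
  using s_one by (simp add: kappa_def rcos_const is_group subset[THEN subsetD])

lemma factor_set_mem:
  assumes "a \<in> carrier (G Mod H)" "b \<in> carrier (G Mod H)"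
  shows "factor_set a b \<in> H"
proof -
  have "a <#> b \<in> carrier (G Mod H)"
    using assms factorgroup_is_group by (metis group.is_monoid monoid.m_closed mult_FactGroup)
  moreover have "H #> (s a \<otimes> s b) = a <#> b"
    using assms s_closed rcos_s by (simp flip: rcos_sum)
  ultimately show ?thesis
    unfolding factor_set_def using assms s_closed rcos_s by (intro mult_inv_mem_of_rcos_eq) auto
qed

lemma factor_set_one: "factor_set H H = \<one>"
  using s_one by (simp add: factor_set_def subgroup_mult_id subgroup_axioms)

lemma kappa_mult:
  assumes g: "g \<in> carrier G" and h: "h \<in> carrier G"
  shows "kappa (g \<otimes> h) =
    kappa g \<otimes> (s (H #> g) \<otimes> kappa h \<otimes> inv (s (H #> g))) \<otimes> factor_set (H #> g) (H #> h)"
proof -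
  have cancel: "inv x \<otimes> (x \<otimes> y) = y" if "x \<in> carrier G" "y \<in> carrier G" for x y
    using that by (simp add: m_assoc[symmetric])
  show ?thesis
    using g h s_closed[OF rcos_closed[OF g]] s_closed[OF rcos_closed[OF h]]
      s_closed[OF rcos_closed[OF m_closed[OF g h]]]
    by (simp add: kappa_def factor_set_def rcos_sum m_assoc cancel)
qed

end

lemma (in normal) normal_transversal_exists: "\<exists>s. normal_transversal H G s"
proof
  define s where "s q = (if q = H then \<one> else (SOME g. g \<in> carrier G \<and> H #> g = q))" for q
  have s: "s q \<in> carrier G \<and> H #> s q = q" if "q \<in> carrier (G Mod H)" for q
  proof (cases "q = H")
    case True
    then show ?thesis by (simp add: s_def coset_join2 is_group subgroup_axioms)
  next
    case False
    have "\<exists>g. g \<in> carrier G \<and> H #> g = q"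
      using that unfolding carrier_FactGroup by blast
    then show ?thesis
      using False someI_ex[of "\<lambda>g. g \<in> carrier G \<and> H #> g = q"] by (simp add: s_def)
  qed
  show "normal_transversal H G s"
    by unfold_locales (use s in \<open>auto simp: s_def\<close>)
qed

context normal_transversal
begin

context
  fixes A :: "('e, 'f) monoid_scheme" and \<phi> :: "'a \<Rightarrow> 'e"
  assumes A: "comm_group A"
    and \<phi>_hom: "\<phi> \<in> hom (G\<lparr>carrier := H\<rparr>) A"
    and \<phi>_invariant: "\<And>x k. x \<in> carrier G \<Longrightarrow> k \<in> H \<Longrightarrow> \<phi> (x \<otimes> k \<otimes> inv x) = \<phi> k"
begin

lemma \<phi>_group_hom: "group_hom (G\<lparr>carrier := H\<rparr>) A \<phi>"
  using A \<phi>_hom subgroup_is_group[OF is_group]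
  by (simp add: group_hom_def group_hom_axioms_def comm_group.axioms(2))

lemma \<phi>_closed: "k \<in> H \<Longrightarrow> \<phi> k \<in> carrier A"
  using \<phi>_hom by (auto simp: hom_def)

lemma \<phi>_mult: "k \<in> H \<Longrightarrow> l \<in> H \<Longrightarrow> \<phi> (k \<otimes> l) = \<phi> k \<otimes>\<^bsub>A\<^esub> \<phi> l"
  using \<phi>_hom by (auto simp: hom_def)

lemma \<phi>_one: "\<phi> \<one> = \<one>\<^bsub>A\<^esub>"
  using group_hom.hom_one[OF \<phi>_group_hom] by simp

lemma \<phi>_pow_order: "k \<in> H \<Longrightarrow> \<phi> k [^]\<^bsub>A\<^esub> order G = \<one>\<^bsub>A\<^esub>"
  using group_hom.hom_nat_pow[OF \<phi>_group_hom, of k "order G"] pow_order_eq_1[of k] subset \<phi>_one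
  by (auto simp: nat_pow_consistent[symmetric])

lemma \<phi>_kappa_mult:
  assumes "g \<in> carrier G" "h \<in> carrier G"
  shows "\<phi> (kappa (g \<otimes> h)) = \<phi> (kappa g) \<otimes>\<^bsub>A\<^esub> \<phi> (kappa h) \<otimes>\<^bsub>A\<^esub> \<phi> (factor_set (H #> g) (H #> h))"
proof -
  have "kappa g \<in> H" "s (H #> g) \<otimes> kappa h \<otimes> inv (s (H #> g)) \<in> H" "factor_set (H #> g) (H #> h) \<in> H"
    using assms kappa_mem s_closed rcos_closed inv_op_closed2 factor_set_mem by auto
  then show ?thesis
    using assms by (simp add: kappa_mult \<phi>_mult \<phi>_invariant kappa_mem s_closed rcos_closed)
qed

lemma hom_extends_if_factor_set_splits:
  assumes c: "\<And>q. q \<in> carrier (G Mod H) \<Longrightarrow> c q \<in> carrier A"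
    and split: "\<And>a b. a \<in> carrier (G Mod H) \<Longrightarrow> b \<in> carrier (G Mod H) \<Longrightarrow>
      \<phi> (factor_set a b) \<otimes>\<^bsub>A\<^esub> c (a <#> b) = c a \<otimes>\<^bsub>A\<^esub> c b"
  shows "\<exists>\<psi>\<in>hom G A. \<forall>k\<in>H. \<psi> k = \<phi> k"
proof -
  interpret A: comm_group A by (fact A)
  define \<psi> where "\<psi> g = \<phi> (kappa g) \<otimes>\<^bsub>A\<^esub> c (H #> g)" for g
  have closed: "\<phi> (kappa g) \<in> carrier A" "c (H #> g) \<in> carrier A" if "g \<in> carrier G" for g
    using that \<phi>_closed kappa_mem c rcos_closed by auto
  have "\<psi> (g \<otimes> h) = \<psi> g \<otimes>\<^bsub>A\<^esub> \<psi> h" if "g \<in> carrier G" "h \<in> carrier G" for g h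
  proof -
    have "\<psi> (g \<otimes> h) = \<phi> (kappa g) \<otimes>\<^bsub>A\<^esub> \<phi> (kappa h) \<otimes>\<^bsub>A\<^esub>
        (\<phi> (factor_set (H #> g) (H #> h)) \<otimes>\<^bsub>A\<^esub> c ((H #> g) <#> (H #> h)))"
      using that closed factor_set_mem rcos_closed \<phi>_closed
      by (simp add: \<psi>_def \<phi>_kappa_mult rcos_sum A.m_assoc)
    also have "\<dots> = \<psi> g \<otimes>\<^bsub>A\<^esub> \<psi> h"
      using that closed rcos_closed by (simp add: split \<psi>_def A.m_ac)
    finally show ?thesis .
  qed
  then have "\<psi> \<in> hom G A"
    using closed by (auto simp: hom_def \<psi>_def)
  moreover have "c H = \<one>\<^bsub>A\<^esub>"
  proof -
    have "H \<in> carrier (G Mod H)" using rcos_closed[of \<one>] coset_join2 is_group subgroup_axioms by auto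
    then have "c H \<otimes>\<^bsub>A\<^esub> c H = c H"
      using split[of H H] c by (simp add: factor_set_one \<phi>_one subgroup_mult_id subgroup_axioms)
    then show ?thesis using c \<open>H \<in> carrier (G Mod H)\<close> by simp
  qed
  then have "\<psi> k = \<phi> k" if "k \<in> H" for k
    using that \<phi>_closed by (simp add: \<psi>_def kappa_of_mem rcos_const is_group)
  ultimately show ?thesis by blast
qed

lemma factor_set_integral_lift:
  assumes p: "Factorial_Ring.prime p" and fin: "finite (carrier G)" and hyp: "hypothesis_p p A"
  obtains w m U E where "w \<in> carrier A" "\<And>i j :: int. w [^]\<^bsub>A\<^esub> i = w [^]\<^bsub>A\<^esub> j \<longleftrightarrow> int p ^ m dvd j - i"
    and "\<And>a b. a \<in> carrier (G Mod H) \<Longrightarrow> b \<in> carrier (G Mod H) \<Longrightarrow> \<phi> (factor_set a b) = w [^]\<^bsub>A\<^esub> U (a, b)"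
    and "\<And>q. int (card (carrier (G Mod H))) ^ card (carrier (G Mod H)) dvd U q"
    and "\<And>g. g \<in> carrier G \<Longrightarrow> \<phi> (kappa g) = w [^]\<^bsub>A\<^esub> (E g :: int)"
proof -
  interpret A: comm_group A by (fact A)
  define N where "N = card (carrier (G Mod H))"
  have "order G > 0" "N > 0"
    using fin by (auto simp: order_def N_def carrier_FactGroup card_gt_0_iff)
  then obtain w m where w: "w \<in> carrier A" "A.ord w = p ^ m"
    and torsion: "\<And>y. y \<in> carrier A \<Longrightarrow> y [^]\<^bsub>A\<^esub> order G = \<one>\<^bsub>A\<^esub> \<Longrightarrow> \<exists>j. y = w [^]\<^bsub>A\<^esub> (int (N ^ N) * j)"
    using A.hypothesis_p_torsion_as_powers[OF p hyp] by (metis zero_less_power)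
  have "\<forall>q\<in>carrier (G Mod H) \<times> carrier (G Mod H).
      \<exists>j. \<phi> (factor_set (fst q) (snd q)) = w [^]\<^bsub>A\<^esub> (int (N ^ N) * j)"
    using torsion factor_set_mem \<phi>_closed \<phi>_pow_order by auto
  then obtain U0 :: "'a set \<times> 'a set \<Rightarrow> int" where U0: "\<And>a b. a \<in> carrier (G Mod H) \<Longrightarrow>
      b \<in> carrier (G Mod H) \<Longrightarrow> \<phi> (factor_set a b) = w [^]\<^bsub>A\<^esub> (int (N ^ N) * U0 (a, b))"
    by (metis bchoice fst_conv snd_conv mem_Times_iff)
  have "\<forall>g\<in>carrier G. \<exists>j::int. \<phi> (kappa g) = w [^]\<^bsub>A\<^esub> j"
    using torsion kappa_mem \<phi>_closed \<phi>_pow_order by metis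
  then obtain E :: "'a \<Rightarrow> int" where "\<And>g. g \<in> carrier G \<Longrightarrow> \<phi> (kappa g) = w [^]\<^bsub>A\<^esub> E g"
    by metis
  moreover have "w [^]\<^bsub>A\<^esub> i = w [^]\<^bsub>A\<^esub> j \<longleftrightarrow> int p ^ m dvd j - i" for i j :: int
    using A.int_pow_eq[OF w(1)] w(2) by simp
  ultimately show ?thesis
    using that[of w m "\<lambda>q. int (N ^ N) * U0 q" E] w(1) U0 by (simp add: N_def)
qed

lemma factor_set_splits:
  assumes p: "Factorial_Ring.prime p" and fin: "finite (carrier G)" and hyp: "hypothesis_p p A"
    and cond: "schur_p_part_trivial p (G Mod H) \<or> coinflation_p_surjective p G H"
  obtains c where "\<And>q. q \<in> carrier (G Mod H) \<Longrightarrow> c q \<in> carrier A"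
    and "\<And>a b. a \<in> carrier (G Mod H) \<Longrightarrow> b \<in> carrier (G Mod H) \<Longrightarrow>
      \<phi> (factor_set a b) \<otimes>\<^bsub>A\<^esub> c (a <#> b) = c a \<otimes>\<^bsub>A\<^esub> c b"
proof -
  interpret A: comm_group A by (fact A)
  obtain w m U E where w: "w \<in> carrier A" and w_eq: "\<And>i j :: int. w [^]\<^bsub>A\<^esub> i = w [^]\<^bsub>A\<^esub> j \<longleftrightarrow> int p ^ m dvd j - i"
    and U: "\<And>a b. a \<in> carrier (G Mod H) \<Longrightarrow> b \<in> carrier (G Mod H) \<Longrightarrow> \<phi> (factor_set a b) = w [^]\<^bsub>A\<^esub> U (a, b)"
    and U_dvd: "\<And>q. int (card (carrier (G Mod H))) ^ card (carrier (G Mod H)) dvd U q"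
    and E: "\<And>g. g \<in> carrier G \<Longrightarrow> \<phi> (kappa g) = w [^]\<^bsub>A\<^esub> (E g :: int)"
    using factor_set_integral_lift[OF p fin hyp] by blast
  have infl: "int p ^ m dvd E (g \<otimes> h) - E g - E h - U (H #> g, H #> h)"
    if "g \<in> carrier G" "h \<in> carrier G" for g h
  proof -
    have "w [^]\<^bsub>A\<^esub> (E g + E h + U (H #> g, H #> h)) = w [^]\<^bsub>A\<^esub> E (g \<otimes> h)"
      using that \<phi>_kappa_mult E U rcos_closed w by (simp add: A.int_pow_mult)
    then show ?thesis
      unfolding w_eq by (simp add: algebra_simps)
  qed
  obtain C where C: "\<And>a b. a \<in> carrier (G Mod H) \<Longrightarrow> b \<in> carrier (G Mod H) \<Longrightarrow>
      int p ^ m dvd C a + C b - C (a \<otimes>\<^bsub>G Mod H\<^esub> b) - U (a, b)"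
  proof (rule coboundary_mod_of_vanishing_on_cycles2[where U = U and P = "int p ^ m"])
    show "group (G Mod H)"
      by (rule factorgroup_is_group)
    show "finite (carrier (G Mod H))"
      using fin by (simp add: carrier_FactGroup)
    show "int p ^ m dvd (\<Sum>q\<in>carrier (G Mod H) \<times> carrier (G Mod H). U q * z q)"
      if "z \<in> cycles2 (G Mod H)" for z
      using inflated_coboundary_mod_vanishes_on_cycles2[OF p fin infl cond that] .
  qed (use U_dvd in blast)+
  show ?thesis
  proof (rule that[of "\<lambda>q. w [^]\<^bsub>A\<^esub> C q"])
    show "w [^]\<^bsub>A\<^esub> C q \<in> carrier A" for q
      using w by simp
    show "\<phi> (factor_set a b) \<otimes>\<^bsub>A\<^esub> w [^]\<^bsub>A\<^esub> C (a <#> b) = w [^]\<^bsub>A\<^esub> C a \<otimes>\<^bsub>A\<^esub> w [^]\<^bsub>A\<^esub> C b"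
      if "a \<in> carrier (G Mod H)" "b \<in> carrier (G Mod H)" for a b
      using that C[of a b] U w by (simp add: A.int_pow_mult[symmetric] w_eq algebra_simps)
  qed
qed

end

end

lemma (in normal) invariant_hom_extends:
  assumes p: "Factorial_Ring.prime p" and fin: "finite (carrier G)"
    and A: "comm_group A" and hyp: "hypothesis_p p A"
    and \<phi>_hom: "\<phi> \<in> hom (G\<lparr>carrier := H\<rparr>) A"
    and \<phi>_invariant: "\<And>x k. x \<in> carrier G \<Longrightarrow> k \<in> H \<Longrightarrow> \<phi> (x \<otimes> k \<otimes> inv x) = \<phi> k"
    and cond: "schur_p_part_trivial p (G Mod H) \<or> coinflation_p_surjective p G H"
  shows "\<exists>\<psi>\<in>hom G A. \<forall>k\<in>H. \<psi> k = \<phi> k"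
proof -
  obtain s where "normal_transversal H G s"
    using normal_transversal_exists by blast
  then interpret normal_transversal H G s .
  obtain c where "\<And>q. q \<in> carrier (G Mod H) \<Longrightarrow> c q \<in> carrier A"
    and "\<And>a b. a \<in> carrier (G Mod H) \<Longrightarrow> b \<in> carrier (G Mod H) \<Longrightarrow>
      \<phi> (factor_set a b) \<otimes>\<^bsub>A\<^esub> c (a <#> b) = c a \<otimes>\<^bsub>A\<^esub> c b"
    using factor_set_splits[OF A \<phi>_hom \<phi>_invariant p fin hyp cond] by blast
  then show ?thesis
    using hom_extends_if_factor_set_splits[OF A \<phi>_hom \<phi>_invariant] by blast
qed

section \<open>Subdirect products\<close>

locale subdirect_pair = G: group G + H: group H
  for G :: "('g, 'x) monoid_scheme" and H :: "('h, 'y) monoid_scheme" +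
  fixes U :: "('g \<times> 'h) set"
  assumes subdirect: "subdirect_product G H U"
begin

lemma subgroup_U: "subgroup U (G \<times>\<times> H)"
  using subdirect by (simp add: subdirect_product_def)

lemma mem_carrier: "(g, h) \<in> U \<Longrightarrow> g \<in> carrier G \<and> h \<in> carrier H"
  using subgroup.subset[OF subgroup_U] by auto

lemma mult_mem: "(g, h) \<in> U \<Longrightarrow> (g', h') \<in> U \<Longrightarrow> (g \<otimes>\<^bsub>G\<^esub> g', h \<otimes>\<^bsub>H\<^esub> h') \<in> U"
  using subgroup.m_closed[OF subgroup_U] by fastforce

lemma inv_mem: "(g, h) \<in> U \<Longrightarrow> (inv\<^bsub>G\<^esub> g, inv\<^bsub>H\<^esub> h) \<in> U"
  using subgroup.m_inv_closed[OF subgroup_U] mem_carrier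
  by (fastforce simp: G.group_axioms H.group_axioms)

lemma one_mem: "(\<one>\<^bsub>G\<^esub>, \<one>\<^bsub>H\<^esub>) \<in> U"
  using subgroup.one_closed[OF subgroup_U] by simp

lemma exists_right: "g \<in> carrier G \<Longrightarrow> \<exists>h. (g, h) \<in> U"
  using subdirect by (auto simp: subdirect_product_def p1_def)

lemma exists_left: "h \<in> carrier H \<Longrightarrow> \<exists>g. (g, h) \<in> U"
  using subdirect by (auto simp: subdirect_product_def p2_def)

lemma mem_k1: "k \<in> k1 H U \<longleftrightarrow> (k, \<one>\<^bsub>H\<^esub>) \<in> U"
  by (simp add: k1_def)

lemma conj_mem_k1:
  assumes "(x, y) \<in> U" "k \<in> k1 H U"
  shows "(x, y) \<otimes>\<^bsub>G \<times>\<times> H\<^esub> (k, \<one>\<^bsub>H\<^esub>) \<otimes>\<^bsub>G \<times>\<times> H\<^esub> inv\<^bsub>G \<times>\<times> H\<^esub> (x, y) =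
    (x \<otimes>\<^bsub>G\<^esub> k \<otimes>\<^bsub>G\<^esub> inv\<^bsub>G\<^esub> x, \<one>\<^bsub>H\<^esub>)"
  using assms mem_carrier[of x y] mem_carrier[of k "\<one>\<^bsub>H\<^esub>"]
  by (simp add: mem_k1 inv_DirProd G.group_axioms H.group_axioms)

lemma k1_normal: "k1 H U \<lhd> G"
  unfolding G.normal_inv_iff
proof (intro conjI ballI G.subgroupI)
  show "k1 H U \<subseteq> carrier G" "k1 H U \<noteq> {}"
    using mem_carrier one_mem by (auto simp: mem_k1)
  show "inv\<^bsub>G\<^esub> k \<in> k1 H U" if "k \<in> k1 H U" for k
    using inv_mem that by (fastforce simp: mem_k1)
  show "k \<otimes>\<^bsub>G\<^esub> l \<in> k1 H U" if "k \<in> k1 H U" "l \<in> k1 H U" for k l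
    using mult_mem that by (fastforce simp: mem_k1)
  show "x \<otimes>\<^bsub>G\<^esub> k \<otimes>\<^bsub>G\<^esub> inv\<^bsub>G\<^esub> x \<in> k1 H U" if "x \<in> carrier G" "k \<in> k1 H U" for x k
  proof -
    obtain y where xy: "(x, y) \<in> U" using exists_right \<open>x \<in> carrier G\<close> by blast
    have "(x, y) \<otimes>\<^bsub>G \<times>\<times> H\<^esub> (k, \<one>\<^bsub>H\<^esub>) \<in> U"
      using mult_mem[OF xy, of k "\<one>\<^bsub>H\<^esub>"] that(2) by (simp add: mem_k1)
    moreover have "inv\<^bsub>G \<times>\<times> H\<^esub> (x, y) \<in> U"
      using subgroup.m_inv_closed[OF subgroup_U xy] .
    ultimately have "(x, y) \<otimes>\<^bsub>G \<times>\<times> H\<^esub> (k, \<one>\<^bsub>H\<^esub>) \<otimes>\<^bsub>G \<times>\<times> H\<^esub> inv\<^bsub>G \<times>\<times> H\<^esub> (x, y) \<in> U"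
      by (rule subgroup.m_closed[OF subgroup_U])
    then show ?thesis using conj_mem_k1[OF xy that(2)] by (simp add: mem_k1)
  qed
qed

end

context subdirect_pair
begin

context
  fixes A :: "('e, 'f) monoid_scheme" and f :: "'g \<times> 'h \<Rightarrow> 'e"
  assumes A: "comm_group A" and f_hom: "f \<in> hom ((G \<times>\<times> H)\<lparr>carrier := U\<rparr>) A"
begin

lemma f_closed: "u \<in> U \<Longrightarrow> f u \<in> carrier A"
  using f_hom by (auto simp: hom_def)

lemma f_mult: "(g, h) \<in> U \<Longrightarrow> (g', h') \<in> U \<Longrightarrow> f (g \<otimes>\<^bsub>G\<^esub> g', h \<otimes>\<^bsub>H\<^esub> h') = f (g, h) \<otimes>\<^bsub>A\<^esub> f (g', h')"
  using hom_mult[OF f_hom, of "(g, h)" "(g', h')"] by simp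

lemma restriction_hom: "(\<lambda>k. f (k, \<one>\<^bsub>H\<^esub>)) \<in> hom (G\<lparr>carrier := k1 H U\<rparr>) A"
  using f_closed f_mult[of _ "\<one>\<^bsub>H\<^esub>" _ "\<one>\<^bsub>H\<^esub>"] by (auto simp: hom_def mem_k1)

lemma restriction_invariant:
  assumes x: "x \<in> carrier G" and k: "k \<in> k1 H U"
  shows "f (x \<otimes>\<^bsub>G\<^esub> k \<otimes>\<^bsub>G\<^esub> inv\<^bsub>G\<^esub> x, \<one>\<^bsub>H\<^esub>) = f (k, \<one>\<^bsub>H\<^esub>)"
proof -
  interpret A: comm_group A by (fact A)
  obtain y where xy: "(x, y) \<in> U" using exists_right x by blast
  have conj: "(x \<otimes>\<^bsub>G\<^esub> k \<otimes>\<^bsub>G\<^esub> inv\<^bsub>G\<^esub> x, \<one>\<^bsub>H\<^esub>) \<in> U"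
    using normal.inv_op_closed2[OF k1_normal x k] by (simp add: mem_k1)
  have "k \<in> carrier G" "y \<in> carrier H" using k xy mem_carrier by (auto simp: mem_k1)
  then have "f (x \<otimes>\<^bsub>G\<^esub> k \<otimes>\<^bsub>G\<^esub> inv\<^bsub>G\<^esub> x, \<one>\<^bsub>H\<^esub>) \<otimes>\<^bsub>A\<^esub> f (x, y) = f (x, y) \<otimes>\<^bsub>A\<^esub> f (k, \<one>\<^bsub>H\<^esub>)"
    using f_mult[OF conj xy] f_mult[OF xy, of k "\<one>\<^bsub>H\<^esub>"] x k by (simp add: G.m_assoc mem_k1)
  then show ?thesis
    using f_closed conj xy k by (simp add: A.m_comm mem_k1)
qed

lemma f_splits_as_product:
  assumes a: "a \<in> hom G A" and a_k1: "\<And>k. k \<in> k1 H U \<Longrightarrow> a k = f (k, \<one>\<^bsub>H\<^esub>)"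
  obtains b where "b \<in> hom H A" "\<And>g h. (g, h) \<in> U \<Longrightarrow> f (g, h) = a g \<otimes>\<^bsub>A\<^esub> b h"
proof -
  interpret A: comm_group A by (fact A)
  interpret a: group_hom G A a
    using a A by (simp add: group_hom_def group_hom_axioms_def G.group_axioms comm_group.axioms(2))
  define l where "l h = (SOME g. (g, h) \<in> U)" for h
  have l: "(l h, h) \<in> U" if "h \<in> carrier H" for h
    unfolding l_def using exists_left[OF that] by (rule someI_ex)
  define b where "b h = inv\<^bsub>A\<^esub> a (l h) \<otimes>\<^bsub>A\<^esub> f (l h, h)" for h
  have b_closed: "b h \<in> carrier A" if "h \<in> carrier H" for h
    using l[OF that] mem_carrier f_closed by (simp add: b_def)
  have factor: "f (g, h) = a g \<otimes>\<^bsub>A\<^esub> b h" if gh: "(g, h) \<in> U" for g h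
  proof -
    have g: "g \<in> carrier G" and h: "h \<in> carrier H" using gh mem_carrier by auto
    have lh: "(l h, h) \<in> U" "l h \<in> carrier G" using l[OF h] mem_carrier by auto
    have k: "(g \<otimes>\<^bsub>G\<^esub> inv\<^bsub>G\<^esub> l h, \<one>\<^bsub>H\<^esub>) \<in> U"
      using mult_mem[OF gh inv_mem[OF lh(1)]] h by simp
    have "f (g, h) = f (g \<otimes>\<^bsub>G\<^esub> inv\<^bsub>G\<^esub> l h \<otimes>\<^bsub>G\<^esub> l h, \<one>\<^bsub>H\<^esub> \<otimes>\<^bsub>H\<^esub> h)"
      using g h lh(2) by (simp add: G.m_assoc)
    also have "\<dots> = a (g \<otimes>\<^bsub>G\<^esub> inv\<^bsub>G\<^esub> l h) \<otimes>\<^bsub>A\<^esub> f (l h, h)"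
      using f_mult[OF k lh(1)] a_k1 k by (simp add: mem_k1)
    finally show ?thesis
      using g lh f_closed by (simp add: b_def A.m_assoc)
  qed
  have "b (h \<otimes>\<^bsub>H\<^esub> h') = b h \<otimes>\<^bsub>A\<^esub> b h'" if "h \<in> carrier H" "h' \<in> carrier H" for h h'
  proof -
    have U: "(l h, h) \<in> U" "(l h', h') \<in> U" using l that by auto
    then have "a (l h) \<otimes>\<^bsub>A\<^esub> a (l h') \<otimes>\<^bsub>A\<^esub> b (h \<otimes>\<^bsub>H\<^esub> h') =
        a (l h) \<otimes>\<^bsub>A\<^esub> a (l h') \<otimes>\<^bsub>A\<^esub> (b h \<otimes>\<^bsub>A\<^esub> b h')"
      using factor[OF mult_mem[OF U]] f_mult[OF U] factor[OF U(1)] factor[OF U(2)] mem_carrier b_closed that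
      by (simp add: A.m_ac)
    then show ?thesis
      using U mem_carrier b_closed that by (simp add: A.m_assoc)
  qed
  then have "b \<in> hom H A"
    using b_closed by (auto simp: hom_def)
  with factor show ?thesis using that by blast
qed

lemma extends_if_restriction_extends:
  assumes a: "a \<in> hom G A" and a_k1: "\<And>k. k \<in> k1 H U \<Longrightarrow> a k = f (k, \<one>\<^bsub>H\<^esub>)"
  shows "\<exists>F\<in>hom (G \<times>\<times> H) A. \<forall>u\<in>U. F u = f u"
proof -
  interpret A: comm_group A by (fact A)
  obtain b where b: "b \<in> hom H A" and factor: "\<And>g h. (g, h) \<in> U \<Longrightarrow> f (g, h) = a g \<otimes>\<^bsub>A\<^esub> b h"
    using f_splits_as_product[OF a a_k1] by blast
  define F where "F u = a (fst u) \<otimes>\<^bsub>A\<^esub> b (snd u)" for u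
  have "F \<in> hom (G \<times>\<times> H) A"
    using hom_in_carrier[OF a] hom_in_carrier[OF b] hom_mult[OF a] hom_mult[OF b]
    by (intro homI) (auto simp: F_def A.m_ac)
  moreover have "F u = f u" if "u \<in> U" for u
    using that factor[of "fst u" "snd u"] by (simp add: F_def)
  ultimately show ?thesis by blast
qed

end

end

theorem theorem1p2:
  fixes p :: nat and G :: "'g monoid" and H :: "'h monoid" and U :: "('g \<times> 'h) set"
  assumes "Factorial_Ring.prime p"
    and "group G" and "group H" and "finite (carrier G)" and "finite (carrier H)"
    and "subdirect_product G H U"
    and "schur_p_part_trivial p (G Mod (k1 H U))
         \<or> coinflation_p_surjective p G (k1 H U)"
  shows "p_extensible p G H U TYPE('a)"
  unfolding p_extensible_def A_extensible_def
proof (intro allI impI ballI)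
  fix A :: "'a monoid" and f
  assume A: "comm_group A \<and> hypothesis_p p A" and f: "f \<in> hom ((G \<times>\<times> H)\<lparr>carrier := U\<rparr>) A"
  interpret subdirect_pair G H U
    using assms by (simp add: subdirect_pair_def subdirect_pair_axioms_def)
  interpret K: normal "k1 H U" G
    by (rule k1_normal)
  obtain a where "a \<in> hom G A" "\<forall>k\<in>k1 H U. a k = f (k, \<one>\<^bsub>H\<^esub>)"
    using K.invariant_hom_extends[OF assms(1,4)] A restriction_hom[OF _ f] restriction_invariant[OF _ f]
      assms(7) by blast
  then show "\<exists>F\<in>hom (G \<times>\<times> H) A. \<forall>u\<in>U. F u = f u"
    using extends_if_restriction_extends[OF _ f] A by blast
qed

end
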